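(* Let $A=(A_1,A_2)\in\mathbb{N}^2$ with $\gcd(A_1,A_2)=1$, let $s\ge 2$, and let $$p(x,y)=\sum_{i=1}^s a_i x^{\alpha_i}y^{\beta_i},$$ where $a_i\neq 0$, $\alpha_i,\beta_i\in\mathbb{N}\cup\{0\}$, $A_1\alpha_i+A_2\beta_i=B$ for all $i=1,\dots,s$ with a common $B\in\mathbb{N}$, and $\alpha_1>\alpha_2>\dots>\alpha_s\ge 0$. Put $\nu_i=(\alpha_1-\alpha_i)/A_2$ (these are nonnegative integers) and $g(u)=\sum_{i=1}^s a_i u^{\nu_i}$. Then $p(x,y)\ge 0$ for all $(x,y)\in\mathbb{R}^2$ if and only if both of the following hold: (1) $a_1>0$, $a_s>0$, and $\alpha_1,\beta_1,\alpha_s,\beta_s$ are even nonnegative integers; (2) the polynomial $g$ is nonnegative on $\mathbb{R}$, i.e. either $g$ has no real roots or all its real roots have even multiplicity.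
   Context: $\mathbb{N}=\{1,2,\dots\}$. The polynomial $g$ is called the characteristic polynomial of the form $p$; for $x\neq 0$ one has $p(x,y)=x^{\alpha_1}y^{\beta_1}g(x^{-A_2}y^{A_1})$. *)

theory Defs
  imports "HOL-Computational_Algebra.Polynomial"
begin

definition form_eval :: "nat \<Rightarrow> (nat \<Rightarrow> real) \<Rightarrow> (nat \<Rightarrow> nat) \<Rightarrow> (nat \<Rightarrow> nat) \<Rightarrow> real \<Rightarrow> real \<Rightarrow> real" where
  "form_eval s a \<alpha> \<beta> x y = (\<Sum>i=1..s. a i * x ^ \<alpha> i * y ^ \<beta> i)"

definition char_exp :: "nat \<Rightarrow> (nat \<Rightarrow> nat) \<Rightarrow> nat \<Rightarrow> nat" where
  "char_exp A2 \<alpha> i = (\<alpha> 1 - \<alpha> i) div A2"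

definition char_poly :: "nat \<Rightarrow> nat \<Rightarrow> (nat \<Rightarrow> real) \<Rightarrow> (nat \<Rightarrow> nat) \<Rightarrow> real poly" where
  "char_poly A2 s a \<alpha> = (\<Sum>i=1..s. monom (a i) (char_exp A2 \<alpha> i))"

end

theory Submission
  imports Defs
begin

text \<open>For x \<noteq> 0 the form factors as p(x,y) = x^(\<alpha> 1) y^(\<beta> 1) g(y^A1 / x^A2), and for
  y \<noteq> 0, expanding around the last term instead, as p(x,y) = x^(\<alpha> s) y^(\<beta> s) G(x^A2 / y^A1)
  with G(0) = a s. Near a coordinate axis the sign of p is therefore that of a monomial times
  g(0) = a 1 or G(0) = a s, which forces a 1, a s > 0 and the four exponents to be even.
  As A1, A2 are coprime one of them is odd, so y^A1 / x^A2 takes every nonzero value and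
  p \<ge> 0 off the axis x = 0 is equivalent to g \<ge> 0; the axis itself follows by continuity.\<close>

lemma weighted_exponents_shift:
  fixes A1 A2 a b a' b' :: nat
  assumes "A1 * a + A2 * b = A1 * a' + A2 * b'" and "a' \<le> a" and "coprime A1 A2" and "A2 > 0"
  shows "A2 * ((a - a') div A2) = a - a'" and "b' = b + A1 * ((a - a') div A2)"
proof -
  have "A1 * (a - a') + A1 * a' = A1 * a"
    using assms(2) by (simp add: diff_mult_distrib2)
  then have sum_eq: "A1 * (a - a') + A2 * b = A2 * b'"
    using assms(1) by linarith
  then have "A2 * b \<le> A2 * b'"
    by linarith
  with assms(4) have "b \<le> b'"
    by simp
  with sum_eq have diff_eq: "A1 * (a - a') = A2 * (b' - b)"
    by (simp add: diff_mult_distrib2)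
  then have "A2 dvd a - a'"
    using assms(3) by (metis coprime_commute coprime_dvd_mult_right_iff dvd_triv_left)
  then obtain k where k: "a - a' = A2 * k" ..
  with assms(4) have "(a - a') div A2 = k" by simp
  moreover have "A1 * k = b' - b"
    using diff_eq k assms(4) by (simp add: ac_simps)
  ultimately show "A2 * ((a - a') div A2) = a - a'" and "b' = b + A1 * ((a - a') div A2)"
    using k \<open>b \<le> b'\<close> by simp_all
qed

lemma sum_weighted_monomials_factor:
  fixes x y :: real and A1 A2 a0 b0 :: nat and \<alpha> \<beta> :: "'i \<Rightarrow> nat"
  assumes "x \<noteq> 0" and "coprime A1 A2" and "A2 > 0"
    and weight: "\<And>i. i \<in> I \<Longrightarrow> A1 * \<alpha> i + A2 * \<beta> i = A1 * a0 + A2 * b0"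
    and dominated: "\<And>i. i \<in> I \<Longrightarrow> \<alpha> i \<le> a0"
  shows "(\<Sum>i\<in>I. c i * x ^ \<alpha> i * y ^ \<beta> i)
           = x ^ a0 * y ^ b0 * poly (\<Sum>i\<in>I. monom (c i) ((a0 - \<alpha> i) div A2)) (y ^ A1 / x ^ A2)"
  unfolding poly_sum poly_monom sum_distrib_left
proof (rule sum.cong)
  fix i assume "i \<in> I"
  define n where "n = (a0 - \<alpha> i) div A2"
  have "a0 = \<alpha> i + A2 * n" and "\<beta> i = b0 + A1 * n"
    using weighted_exponents_shift[OF weight[OF \<open>i \<in> I\<close>, symmetric] dominated[OF \<open>i \<in> I\<close>]]
      assms(2,3) dominated[OF \<open>i \<in> I\<close>] unfolding n_def by simp_all
  then have "x ^ a0 * y ^ b0 * (y ^ A1 / x ^ A2) ^ n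
               = x ^ \<alpha> i * (x ^ (A2 * n) / x ^ (A2 * n)) * (y ^ b0 * y ^ (A1 * n))"
    by (simp add: power_add power_mult power_divide)
  also have "\<dots> = x ^ \<alpha> i * y ^ \<beta> i"
    using \<open>x \<noteq> 0\<close> \<open>\<beta> i = b0 + A1 * n\<close> by (simp add: power_add)
  finally show "c i * x ^ \<alpha> i * y ^ \<beta> i
      = x ^ a0 * y ^ b0 * (c i * (y ^ A1 / x ^ A2) ^ ((a0 - \<alpha> i) div A2))"
    unfolding n_def by (simp add: ac_simps)
qed simp

lemma poly_sum_monom_at_0:
  assumes "finite I" and "r \<in> I" and "n r = 0" and "\<And>i. i \<in> I \<Longrightarrow> i \<noteq> r \<Longrightarrow> n i \<noteq> 0"
  shows "poly (\<Sum>i\<in>I. monom (c i) (n i)) 0 = c r"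
proof -
  have "poly (\<Sum>i\<in>I. monom (c i) (n i)) 0 = (\<Sum>i\<in>I. if i = r then c i else 0)"
    unfolding poly_0_coeff_0 coeff_sum coeff_monom using assms(3,4) by (intro sum.cong) force+
  also have "\<dots> = c r"
    using assms(1,2) by simp
  finally show ?thesis .
qed

lemma nonneg_power_mult_imp_even_pos:
  fixes k :: "real \<Rightarrow> real"
  assumes "isCont k 0" and "k 0 \<noteq> 0" and nonneg: "\<And>x. x \<noteq> 0 \<Longrightarrow> 0 \<le> x ^ e * k x"
  shows "0 < k 0 \<and> even e"
proof -
  obtain d where "d > 0" and near: "\<And>x. x \<noteq> 0 \<Longrightarrow> \<bar>x\<bar> < d \<Longrightarrow> \<bar>k x - k 0\<bar> < \<bar>k 0\<bar>"
    using LIM_D[OF assms(1)[unfolded isCont_def], of "\<bar>k 0\<bar>"] assms(2) by auto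
  have "0 \<le> (d/2) ^ e * k (d/2)" and "0 < (d/2) ^ e"
    using nonneg[of "d/2"] \<open>d > 0\<close> by simp_all
  then have "0 \<le> k (d/2)"
    by (metis mult_le_cancel_left_pos mult_zero_right)
  with near[of "d/2"] \<open>d > 0\<close> have "0 < k 0" by auto
  with near[of "-d/2"] \<open>d > 0\<close> have "0 < k (-d/2)" by auto
  with nonneg[of "-d/2"] \<open>d > 0\<close> have "0 \<le> (-d/2) ^ e"
    by (simp add: zero_le_mult_iff)
  with \<open>d > 0\<close> have "even e"
    by (simp add: zero_le_power_eq)
  with \<open>0 < k 0\<close> show ?thesis ..
qed

lemma nonneg_power_mult_poly_power_imp:
  fixes h :: "real poly"
  assumes "m > 0" and "poly h 0 \<noteq> 0" and "\<And>x. x \<noteq> 0 \<Longrightarrow> 0 \<le> x ^ e * poly h (x ^ m)"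
  shows "0 < poly h 0 \<and> even e"
proof -
  have "0 < poly h (0 ^ m) \<and> even e"
  proof (rule nonneg_power_mult_imp_even_pos)
    show "isCont (\<lambda>x. poly h (x ^ m)) 0"
      by (intro continuous_poly continuous_intros)
  qed (use assms in \<open>simp_all add: power_0_left\<close>)
  with assms(1) show ?thesis
    by (simp add: power_0_left)
qed

lemma nonneg_inverse_power_mult_iff:
  fixes x c :: real
  assumes "x \<noteq> 0"
  shows "0 \<le> (1 / x) ^ n * c \<longleftrightarrow> 0 \<le> x ^ n * c"
  using assms by (auto simp: power_one_over zero_le_mult_iff zero_le_divide_iff)

lemma coprime_imp_odd:
  fixes A1 A2 :: nat
  assumes "coprime A1 A2"
  shows "odd A1 \<or> odd A2"
  using assms coprime_common_divisor[of A1 A2 2] by auto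

lemma nonzero_eq_ratio_of_powers:
  fixes u :: real
  assumes "coprime A1 A2" and "A1 > 0" and "A2 > 0" and "u \<noteq> 0"
  obtains x y where "x \<noteq> 0" and "y \<noteq> 0" and "y ^ A1 / x ^ A2 = u"
proof (cases "odd A1")
  case True
  with assms(2,4) show ?thesis
    by (intro that[of 1 "root A1 u"]) (simp_all add: odd_real_root_pow)
next
  case False
  with coprime_imp_odd[OF assms(1)] have "odd A2" by simp
  with assms(3,4) show ?thesis
    by (intro that[of "root A2 (1 / u)" 1]) (simp_all add: odd_real_root_pow)
qed

locale quasi_homogeneous_form =
  fixes A1 A2 B s :: nat and a :: "nat \<Rightarrow> real" and \<alpha> \<beta> :: "nat \<Rightarrow> nat"
  assumes weights_pos: "A1 > 0" "A2 > 0" and weights_coprime: "coprime A1 A2"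
    and terms_nonempty: "s \<ge> 1"
    and weighted_degree: "\<And>i. 1 \<le> i \<Longrightarrow> i \<le> s \<Longrightarrow> A1 * \<alpha> i + A2 * \<beta> i = B"
    and alpha_decreasing: "\<And>i j. 1 \<le> i \<Longrightarrow> i < j \<Longrightarrow> j \<le> s \<Longrightarrow> \<alpha> j < \<alpha> i"
begin

text \<open>The characteristic polynomial seen from the last term: G(v) = v^(\<nu> s) g(1/v).\<close>
definition reversed_char_poly :: "real poly" where
  "reversed_char_poly = (\<Sum>i=1..s. monom (a i) ((\<beta> s - \<beta> i) div A1))"

lemma alpha_le_first: "i \<in> {1..s} \<Longrightarrow> \<alpha> i \<le> \<alpha> 1"
  using alpha_decreasing[of 1 i] by (cases "i = 1") auto

lemma beta_less_last:
  assumes "i \<in> {1..s}" and "i < s"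
  shows "\<beta> i < \<beta> s"
proof -
  have "A1 * \<alpha> s < A1 * \<alpha> i"
    using alpha_decreasing[of i s] assms weights_pos by simp
  moreover have "A1 * \<alpha> s + A2 * \<beta> s = A1 * \<alpha> i + A2 * \<beta> i"
    using weighted_degree[of s] weighted_degree[of i] assms terms_nonempty by simp
  ultimately have "A2 * \<beta> i < A2 * \<beta> s" by linarith
  then show ?thesis by simp
qed

lemma beta_le_last: "i \<in> {1..s} \<Longrightarrow> \<beta> i \<le> \<beta> s"
  using beta_less_last[of i] by (cases "i = s") auto

lemma form_eq_char_poly:
  assumes "x \<noteq> 0"
  shows "form_eval s a \<alpha> \<beta> x y = x ^ \<alpha> 1 * y ^ \<beta> 1 * poly (char_poly A2 s a \<alpha>) (y ^ A1 / x ^ A2)"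
  unfolding form_eval_def char_poly_def char_exp_def
  using assms weights_pos weights_coprime alpha_le_first terms_nonempty
  by (intro sum_weighted_monomials_factor) (auto simp: weighted_degree)

lemma form_eq_reversed_char_poly:
  assumes "y \<noteq> 0"
  shows "form_eval s a \<alpha> \<beta> x y = y ^ \<beta> s * x ^ \<alpha> s * poly reversed_char_poly (x ^ A2 / y ^ A1)"
proof -
  have "form_eval s a \<alpha> \<beta> x y = (\<Sum>i=1..s. a i * y ^ \<beta> i * x ^ \<alpha> i)"
    unfolding form_eval_def by (simp add: ac_simps)
  also have "\<dots> = y ^ \<beta> s * x ^ \<alpha> s * poly reversed_char_poly (x ^ A2 / y ^ A1)"
    unfolding reversed_char_poly_def
    using assms weights_pos weights_coprime beta_le_last terms_nonempty
    by (intro sum_weighted_monomials_factor) (auto simp: weighted_degree coprime_commute add.commute)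
  finally show ?thesis .
qed

lemma poly_char_poly_0: "poly (char_poly A2 s a \<alpha>) 0 = a 1"
  unfolding char_poly_def
proof (rule poly_sum_monom_at_0)
  fix i assume i: "i \<in> {1..s}" "i \<noteq> 1"
  have "A2 * char_exp A2 \<alpha> i = \<alpha> 1 - \<alpha> i"
    using weighted_exponents_shift(1)[of A1 "\<alpha> 1" A2 "\<beta> 1" "\<alpha> i" "\<beta> i"] i
      weighted_degree alpha_le_first weights_pos weights_coprime terms_nonempty
    unfolding char_exp_def by simp
  moreover have "\<alpha> i < \<alpha> 1"
    using alpha_decreasing[of 1 i] i by simp
  ultimately show "char_exp A2 \<alpha> i \<noteq> 0" by (metis mult_0_right zero_less_diff less_irrefl)
qed (use terms_nonempty in \<open>simp_all add: char_exp_def\<close>)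

lemma poly_reversed_char_poly_0: "poly reversed_char_poly 0 = a s"
  unfolding reversed_char_poly_def
proof (rule poly_sum_monom_at_0)
  fix i assume i: "i \<in> {1..s}" "i \<noteq> s"
  have "A1 * ((\<beta> s - \<beta> i) div A1) = \<beta> s - \<beta> i"
    using weighted_exponents_shift(1)[of A2 "\<beta> s" A1 "\<alpha> s" "\<beta> i" "\<alpha> i"] i
      weighted_degree beta_le_last weights_pos weights_coprime terms_nonempty
    by (simp add: coprime_commute add.commute)
  moreover have "\<beta> i < \<beta> s"
    using beta_less_last[of i] i by simp
  ultimately show "(\<beta> s - \<beta> i) div A1 \<noteq> 0" by (metis mult_0_right zero_less_diff less_irrefl)
qed (use terms_nonempty in simp_all)

lemma form_nonneg_imp_sign_conditions:
  assumes nonneg: "\<And>x y. 0 \<le> form_eval s a \<alpha> \<beta> x y" and "a 1 \<noteq> 0" and "a s \<noteq> 0"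
  shows "0 < a 1 \<and> 0 < a s \<and> even (\<alpha> 1) \<and> even (\<beta> 1) \<and> even (\<alpha> s) \<and> even (\<beta> s)"
proof -
  let ?g = "char_poly A2 s a \<alpha>" and ?G = reversed_char_poly
  have "0 \<le> y ^ \<beta> 1 * poly ?g (y ^ A1)" if "y \<noteq> 0" for y
    using nonneg[of 1 y] form_eq_char_poly[of 1 y] by simp
  from nonneg_power_mult_poly_power_imp[OF _ _ this] have "0 < a 1 \<and> even (\<beta> 1)"
    using weights_pos \<open>a 1 \<noteq> 0\<close> poly_char_poly_0 by simp
  moreover have "0 \<le> x ^ \<alpha> 1 * poly ?g (x ^ A2)" if "x \<noteq> 0" for x
    using nonneg[of "1 / x" 1] form_eq_char_poly[of "1 / x" 1] that
    by (simp add: nonneg_inverse_power_mult_iff[symmetric] power_one_over)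
  from nonneg_power_mult_poly_power_imp[OF _ _ this] have "even (\<alpha> 1)"
    using weights_pos \<open>a 1 \<noteq> 0\<close> poly_char_poly_0 by simp
  moreover have "0 \<le> x ^ \<alpha> s * poly ?G (x ^ A2)" if "x \<noteq> 0" for x
    using nonneg[of x 1] form_eq_reversed_char_poly[of 1 x] by simp
  from nonneg_power_mult_poly_power_imp[OF _ _ this] have "0 < a s \<and> even (\<alpha> s)"
    using weights_pos \<open>a s \<noteq> 0\<close> poly_reversed_char_poly_0 by simp
  moreover have "0 \<le> y ^ \<beta> s * poly ?G (y ^ A1)" if "y \<noteq> 0" for y
    using nonneg[of 1 "1 / y"] form_eq_reversed_char_poly[of "1 / y" 1] that
    by (simp add: nonneg_inverse_power_mult_iff[symmetric] power_one_over)
  from nonneg_power_mult_poly_power_imp[OF _ _ this] have "even (\<beta> s)"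
    using weights_pos \<open>a s \<noteq> 0\<close> poly_reversed_char_poly_0 by simp
  ultimately show ?thesis
    by blast
qed

lemma form_nonneg_imp_char_poly_nonneg:
  assumes nonneg: "\<And>x y. 0 \<le> form_eval s a \<alpha> \<beta> x y"
    and "0 < a 1" and "even (\<alpha> 1)" and "even (\<beta> 1)"
  shows "0 \<le> poly (char_poly A2 s a \<alpha>) u"
proof (cases "u = 0")
  case True
  with assms(2) show ?thesis by (simp add: poly_char_poly_0)
next
  case False
  with weights_coprime weights_pos obtain x y :: real
    where "x \<noteq> 0" "y \<noteq> 0" and u: "y ^ A1 / x ^ A2 = u"
    by (rule nonzero_eq_ratio_of_powers)
  have "0 \<le> x ^ \<alpha> 1 * y ^ \<beta> 1 * poly (char_poly A2 s a \<alpha>) u"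
    using nonneg[of x y] form_eq_char_poly[OF \<open>x \<noteq> 0\<close>, of y] u by simp
  moreover have "0 < x ^ \<alpha> 1 * y ^ \<beta> 1"
    using \<open>x \<noteq> 0\<close> \<open>y \<noteq> 0\<close> assms(3,4) by (simp add: zero_less_power_eq)
  ultimately show ?thesis by (simp add: zero_le_mult_iff)
qed

lemma char_poly_nonneg_imp_form_nonneg:
  assumes "even (\<alpha> 1)" and "even (\<beta> 1)" and "\<forall>u. 0 \<le> poly (char_poly A2 s a \<alpha>) u"
  shows "0 \<le> form_eval s a \<alpha> \<beta> x y"
proof -
  have off_axis: "0 \<le> form_eval s a \<alpha> \<beta> x' y" if "x' \<noteq> 0" for x'
    using form_eq_char_poly[OF that] assms by (simp add: zero_le_even_power)
  show ?thesis
  proof (cases "x = 0")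
    case True
    have "isCont (\<lambda>x'. form_eval s a \<alpha> \<beta> x' y) 0"
      unfolding form_eval_def by (intro continuous_intros)
    then have "((\<lambda>x'. form_eval s a \<alpha> \<beta> x' y) \<longlongrightarrow> form_eval s a \<alpha> \<beta> 0 y) (at 0)"
      by (rule isContD)
    moreover have "\<forall>\<^sub>F x' in at 0. 0 \<le> form_eval s a \<alpha> \<beta> x' y"
      using off_axis by (simp add: eventually_at_filter)
    ultimately show ?thesis
      using True by (intro tendsto_lowerbound) auto
  qed (rule off_axis)
qed

end

theorem mainTheorem1:
  fixes A1 A2 B s :: nat and a :: "nat \<Rightarrow> real" and \<alpha> \<beta> :: "nat \<Rightarrow> nat"
  assumes "A1 \<ge> 1" and "A2 \<ge> 1" and "coprime A1 A2"
    and "s \<ge> 2"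
    and "\<And>i. 1 \<le> i \<Longrightarrow> i \<le> s \<Longrightarrow> a i \<noteq> 0"
    and "B \<ge> 1"
    and "\<And>i. 1 \<le> i \<Longrightarrow> i \<le> s \<Longrightarrow> A1 * \<alpha> i + A2 * \<beta> i = B"
    and "\<And>i j. 1 \<le> i \<Longrightarrow> i < j \<Longrightarrow> j \<le> s \<Longrightarrow> \<alpha> j < \<alpha> i"
  shows "(\<forall>x y. form_eval s a \<alpha> \<beta> x y \<ge> 0) \<longleftrightarrow>
           ((a 1 > 0 \<and> a s > 0 \<and> even (\<alpha> 1) \<and> even (\<beta> 1) \<and> even (\<alpha> s) \<and> even (\<beta> s))
            \<and> (\<forall>u::real. poly (char_poly A2 s a \<alpha>) u \<ge> 0))"
proof -
  interpret quasi_homogeneous_form A1 A2 B s a \<alpha> \<beta>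
    using assms by unfold_locales auto
  have "a 1 \<noteq> 0" and "a s \<noteq> 0"
    using assms(4,5) by simp_all
  then show ?thesis
    using form_nonneg_imp_sign_conditions form_nonneg_imp_char_poly_nonneg
      char_poly_nonneg_imp_form_nonneg
    by blast
qed

end
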